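(* Let $\Gamma<\mathrm{PSL}_2(\mathbb{C})$ be discrete, co-compact and torsion-free, $f:\mathbb{R}/2\pi\mathbb{Z}\to\mathbb{R}$ smooth with $\hat f(0)=0$, $0<\eta\le\eta_0$, $T>0$, and let $h:\mathbb{R}\to\mathbb{C}$ be continuous. Let $(s_1,p_1),\dots,(s_n,p_n)$ be the distinct pairs with $s_j\neq0$, $|s_j|,|p_j|<T$ and $m_\Gamma(\pi_{is_j,p_j})\neq0$. Then \[\lim_{Y\to\infty}\frac1Y\int_{\eta_0}^Yh\big(E^{(T)}[f,g_{y,\eta}]\big)\,dy=\int_Ah_{T,f,\eta}(a)\,da=\int_{\mathbb{R}}h(x)\,d\mu_{T,f,\eta}(x),\] where $A$ is the closure of $\{(s_1y/2\pi,\dots,s_ny/2\pi):y\in\mathbb{R}\}$ in $\mathbb{T}^n=\mathbb{R}^n/\mathbb{Z}^n$, which is a subtorus, and $da$ is the Haar probability measure on $A$.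
   Context: $G=\mathrm{PSL}_2(\mathbb{C})$. $\pi_{is,p}$ ($s\in\mathbb{R},p\in\mathbb{Z}$) is the unitary principal series representation induced from $\begin{pmatrix}e^{(u+i\theta)/2}&*\\0&e^{-(u+i\theta)/2}\end{pmatrix}\mapsto e^{ius+ip\theta}$; $m_\Gamma(\pi)$ is the multiplicity in $L^2(\Gamma\backslash G)$ and $s$ is called a spectral parameter. $\hat f(p)=\frac1{2\pi}\int_0^{2\pi}f(\theta)e^{-ip\theta}d\theta$. Fix smooth even nonnegative $\psi$ supported in $[-1,1]$, $\int\psi=1$; $\psi_\eta(t)=\eta^{-1}\psi(t/\eta)$; $c_{s,\eta}=\int\psi_\eta(t)\frac{e^{t(1+is)}}{1+is}dt$; $b_{f,\eta}=\big(\sum_{p\ne0}m_\Gamma(\pi_{0,p})\mathrm{Re}\,\hat f(p)-2\mathrm{Re}\,\hat f(1)\big)2c_{0,\eta}$. Define $E^{(T)}[f,g_{y,\eta}]=2\sum_{|s|,|p|<T,\ s\neq0}m_\Gamma(\pi_{is,p})\mathrm{Re}\big(\hat f(-p)e^{isy}c_{s,\eta}\big)+b_{f,\eta}$ (sum over principal series in $L^2(\Gamma\backslash G)$), $w_{T}(x_1,\dots,x_n)=2\sum_{j=1}^nm_\Gamma(\pi_{is_j,p_j})\mathrm{Re}\big(\hat f(-p_j)e^{2\pi ix_j}c_{s_j,\eta}\big)+b_{f,\eta}$ on $\mathbb{T}^n$, $h_{T,f,\eta}=h\circ w_T$, and $\mu_{T,f,\eta}$ the pushforward of the Haar probability measure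 on $A$ under $w_T|_A$ (a probability measure on $\mathbb{R}$). *)

theory Defs
  imports "HOL-Analysis.Analysis" "HOL-Probability.Probability"
begin

definition fhat :: "(real \<Rightarrow> real) \<Rightarrow> int \<Rightarrow> complex" where
  "fhat f p = (1 / (2 * pi)) *
     integral {0..2*pi} (\<lambda>\<theta>. complex_of_real (f \<theta>) * exp (- \<i> * of_int p * complex_of_real \<theta>))"

definition psi_eta :: "(real \<Rightarrow> real) \<Rightarrow> real \<Rightarrow> real \<Rightarrow> real" where
  "psi_eta \<psi> \<eta> t = \<psi> (t / \<eta>) / \<eta>"

definition c_se :: "(real \<Rightarrow> real) \<Rightarrow> real \<Rightarrow> real \<Rightarrow> complex" where
  "c_se \<psi> \<eta> s = integral UNIV (\<lambda>t. complex_of_real (psi_eta \<psi> \<eta> t) *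
       exp (complex_of_real t * (1 + \<i> * complex_of_real s)) / (1 + \<i> * complex_of_real s))"

text \<open>Abstract multiplicity data: m s p stands for the multiplicity of pi_{is,p} in L^2(Gamma\G).\<close>
definition b_const :: "(real \<Rightarrow> int \<Rightarrow> nat) \<Rightarrow> (real \<Rightarrow> real) \<Rightarrow> (real \<Rightarrow> real) \<Rightarrow> real \<Rightarrow> real" where
  "b_const m f \<psi> \<eta> =
     ((\<Sum>\<^sub>\<infinity>p\<in>-{0}. real (m 0 p) * Re (fhat f p)) - 2 * Re (fhat f 1)) * (2 * Re (c_se \<psi> \<eta> 0))"

definition spec_set :: "(real \<Rightarrow> int \<Rightarrow> nat) \<Rightarrow> real \<Rightarrow> (real \<times> int) set" where
  "spec_set m T = {(s, p). s \<noteq> 0 \<and> \<bar>s\<bar> < T \<and> \<bar>real_of_int p\<bar> < T \<and> m s p \<noteq> 0}"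

definition E_T :: "(real \<Rightarrow> int \<Rightarrow> nat) \<Rightarrow> (real \<Rightarrow> real) \<Rightarrow> (real \<Rightarrow> real) \<Rightarrow> real \<Rightarrow> real \<Rightarrow> real \<Rightarrow> real" where
  "E_T m f \<psi> \<eta> T y =
     2 * (\<Sum>(s, p)\<in>spec_set m T. real (m s p) *
            Re (fhat f (- p) * exp (\<i> * complex_of_real (s * y)) * c_se \<psi> \<eta> s))
     + b_const m f \<psi> \<eta>"

text \<open>The torus T^J = R^J / Z^J, represented by the fundamental domain [0,1)^J
  (extensional functions on J).\<close>
definition torus_pts :: "'a set \<Rightarrow> ('a \<Rightarrow> real) set" where
  "torus_pts J = PiE J (\<lambda>_. {0..<1})"

definition torus_borel :: "'a set \<Rightarrow> ('a \<Rightarrow> real) measure" where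
  "torus_borel J = PiM J (\<lambda>_. borel)"

definition torus_add :: "'a set \<Rightarrow> ('a \<Rightarrow> real) \<Rightarrow> ('a \<Rightarrow> real) \<Rightarrow> ('a \<Rightarrow> real)" where
  "torus_add J a x = (\<lambda>j\<in>J. frac (x j + a j))"

definition dist_mod1 :: "real \<Rightarrow> real \<Rightarrow> real" where
  "dist_mod1 a b = \<bar>(a - b) - of_int (round (a - b))\<bar>"

definition orbit_closure :: "'a set \<Rightarrow> ('a \<Rightarrow> real) \<Rightarrow> ('a \<Rightarrow> real) set" where
  "orbit_closure J freq = {x \<in> torus_pts J. \<forall>e>0. \<exists>y::real. \<forall>j\<in>J.
       dist_mod1 (x j) (freq j * y / (2 * pi)) < e}"

definition is_haar_prob :: "'a set \<Rightarrow> ('a \<Rightarrow> real) set \<Rightarrow> ('a \<Rightarrow> real) measure \<Rightarrow> bool" where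
  "is_haar_prob J A \<mu> \<longleftrightarrow> sets \<mu> = sets (torus_borel J) \<and> prob_space \<mu> \<and>
     A \<in> sets \<mu> \<and> emeasure \<mu> A = 1 \<and>
     (\<forall>a\<in>A. distr \<mu> (torus_borel J) (torus_add J a) = \<mu>)"

definition haar_prob :: "'a set \<Rightarrow> ('a \<Rightarrow> real) set \<Rightarrow> ('a \<Rightarrow> real) measure" where
  "haar_prob J A = (THE \<mu>. is_haar_prob J A \<mu>)"

definition w_T :: "(real \<Rightarrow> int \<Rightarrow> nat) \<Rightarrow> (real \<Rightarrow> real) \<Rightarrow> (real \<Rightarrow> real) \<Rightarrow> real \<Rightarrow> real \<Rightarrow> ((real \<times> int) \<Rightarrow> real) \<Rightarrow> real" where
  "w_T m f \<psi> \<eta> T x =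
     2 * (\<Sum>j\<in>spec_set m T. real (m (fst j) (snd j)) *
            Re (fhat f (- snd j) * exp (2 * pi * \<i> * complex_of_real (x j)) * c_se \<psi> \<eta> (fst j)))
     + b_const m f \<psi> \<eta>"

end

theory Submission
  imports Defs
begin

text \<open>Along the line \<open>y \<mapsto> (s\<^sub>j y / 2\<pi>)\<^sub>j\<close> in the torus \<open>T\<^sup>J\<close>, \<open>E_T\<close> is the
  trigonometric polynomial \<open>w_T\<close>. A character \<open>\<chi>\<^sub>k\<close> of \<open>T\<^sup>J\<close> restricted to the line is
  \<open>y \<mapsto> e\<^sup>i\<^sup>\<lambda>\<^sup>y\<close> with \<open>\<lambda> = \<Sum>\<^sub>j k\<^sub>j s\<^sub>j\<close>, so its time average tends to \<open>1\<close> if \<open>\<lambda> = 0\<close>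
  and to \<open>0\<close> otherwise. This is also its integral against the Haar measure of the closure \<open>A\<close>
  of the line, because \<open>\<chi>\<^sub>k\<close> is trivial on \<open>A\<close> exactly when \<open>\<lambda> = 0\<close>. By linearity, time
  averages of all trigonometric polynomials converge to their Haar integrals, and \<open>h \<circ> w_T\<close>
  is a uniform limit of polynomials in \<open>w_T\<close> (Weierstrass), which are again trigonometric
  polynomials.

  The Haar measure of \<open>A\<close> exists: write the \<open>s\<^sub>j / 2\<pi>\<close> as integer combinations
  \<open>\<Sum>\<^sub>b n\<^sub>j\<^sub>b g\<^sub>b\<close> of a \<open>\<int>\<close>-independent family \<open>g\<close>. By Kronecker's theorem \<open>A\<close> is the image
  of \<open>T\<^sup>B\<close> under \<open>t \<mapsto> (\<Sum>\<^sub>b n\<^sub>j\<^sub>b t\<^sub>b)\<^sub>j\<close>, and the image of Lebesgue measure is invariant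
  under translations by \<open>A\<close>. It is unique by Fubini's theorem.\<close>

section \<open>Distance to the nearest integer\<close>

definition dist_int :: "real \<Rightarrow> real" where
  "dist_int t = \<bar>t - of_int (round t)\<bar>"

lemma dist_mod1_eq_dist_int: "dist_mod1 a b = dist_int (a - b)"
  by (simp add: dist_mod1_def dist_int_def)

lemma dist_int_nonneg: "0 \<le> dist_int t"
  by (simp add: dist_int_def)

lemma dist_int_le: "dist_int t \<le> \<bar>t - of_int k\<bar>"
proof (cases "k = round t")
  case False
  then have "1 \<le> \<bar>of_int k - of_int (round t) :: real\<bar>"
    by (metis of_int_1_le_iff of_int_abs of_int_diff right_minus_eq zero_less_abs_iff
        int_one_le_iff_zero_less)
  then show ?thesis
    using of_int_round_abs_le[of t] unfolding dist_int_def by linarith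
qed (simp add: dist_int_def)

lemma dist_int_le_abs: "dist_int t \<le> \<bar>t\<bar>"
  using dist_int_le[of t 0] by simp

lemma dist_int_eq_0_iff: "dist_int t = 0 \<longleftrightarrow> t \<in> \<int>"
proof
  assume "dist_int t = 0"
  then show "t \<in> \<int>"
    by (metis Ints_of_int dist_int_def eq_iff_diff_eq_0 abs_eq_0)
next
  assume "t \<in> \<int>"
  then obtain k where "t = of_int k" by (auto elim: Ints_cases)
  then show "dist_int t = 0" using dist_int_le[of t k] dist_int_nonneg[of t] by simp
qed

lemma dist_int_cong:
  assumes "t - u \<in> \<int>"
  shows "dist_int t = dist_int u"
proof -
  obtain k where k: "t = u + of_int k"
    using assms by (metis Ints_cases add.commute diff_add_cancel)
  have "dist_int t \<le> dist_int u"
    using dist_int_le[of t "round u + k"] by (simp add: k dist_int_def)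
  moreover have "dist_int u \<le> dist_int t"
    using dist_int_le[of u "round t - k"] by (simp add: k dist_int_def)
  ultimately show ?thesis by simp
qed

lemma dist_int_add_le: "dist_int (t + u) \<le> dist_int t + dist_int u"
  using dist_int_le[of "t + u" "round t + round u"] by (simp add: dist_int_def)

lemma dist_int_int_mult_le: "dist_int (of_int k * t) \<le> \<bar>of_int k\<bar> * dist_int t"
proof -
  have "dist_int (of_int k * t) \<le> \<bar>of_int k * t - of_int (k * round t)\<bar>"
    by (rule dist_int_le)
  also have "\<dots> = \<bar>of_int k\<bar> * dist_int t"
    by (simp add: dist_int_def abs_mult[symmetric] algebra_simps)
  finally show ?thesis .
qed

lemma dist_int_sum_int_mult_le:
  assumes "finite B" "\<And>b. b \<in> B \<Longrightarrow> dist_int (x b) \<le> e"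
  shows "dist_int (\<Sum>b\<in>B. of_int (n b) * x b) \<le> (\<Sum>b\<in>B. \<bar>of_int (n b)\<bar>) * e"
  using assms
proof (induction B rule: finite_induct)
  case (insert b B)
  have "dist_int (of_int (n b) * x b + (\<Sum>b\<in>B. of_int (n b) * x b))
      \<le> dist_int (of_int (n b) * x b) + dist_int (\<Sum>b\<in>B. of_int (n b) * x b)"
    by (rule dist_int_add_le)
  also have "\<dots> \<le> \<bar>of_int (n b)\<bar> * dist_int (x b) + (\<Sum>b\<in>B. \<bar>of_int (n b)\<bar>) * e"
    using insert by (intro add_mono dist_int_int_mult_le) auto
  also have "\<dots> \<le> \<bar>of_int (n b)\<bar> * e + (\<Sum>b\<in>B. \<bar>of_int (n b)\<bar>) * e"
    using insert.prems by (simp add: mult_left_mono)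
  finally show ?case
    using insert.hyps by (simp add: distrib_right)
qed (simp add: dist_int_def)

lemma dist_int_add_le_abs: "dist_int (t + u) \<le> dist_int t + \<bar>u\<bar>"
  using dist_int_add_le[of t u] dist_int_le_abs[of u] by simp

lemma continuous_on_dist_int: "continuous_on UNIV dist_int"
proof -
  have "\<bar>dist_int t - dist_int u\<bar> \<le> \<bar>t - u\<bar>" for t u
    using dist_int_add_le_abs[of u "t - u"] dist_int_add_le_abs[of t "u - t"] by simp
  then show ?thesis
    unfolding continuous_on_iff dist_real_def by (metis le_less_trans)
qed

lemma tendsto_dist_int [tendsto_intros]:
  "(f \<longlongrightarrow> a) F \<Longrightarrow> ((\<lambda>x. dist_int (f x)) \<longlongrightarrow> dist_int a) F"
  by (rule continuous_on_tendsto_compose[OF continuous_on_dist_int]) auto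

lemma borel_measurable_dist_int [measurable]: "dist_int \<in> borel_measurable borel"
  using continuous_on_dist_int by (rule borel_measurable_continuous_onI)

lemma borel_measurable_frac [measurable]: "(frac :: real \<Rightarrow> real) \<in> borel_measurable borel"
  unfolding frac_def by measurable

lemma frac_eq_if_diff_Ints: "x - y \<in> \<int> \<Longrightarrow> frac x = frac y"
  by (rule frac_diff_zero) simp

section \<open>Characters of the torus\<close>

definition torus_char :: "'a set \<Rightarrow> ('a \<Rightarrow> int) \<Rightarrow> ('a \<Rightarrow> real) \<Rightarrow> complex" where
  "torus_char J k x = iexp (2 * pi * (\<Sum>j\<in>J. of_int (k j) * x j))"

definition torus_line :: "('a \<Rightarrow> real) \<Rightarrow> real \<Rightarrow> 'a \<Rightarrow> real" where
  "torus_line freq y = (\<lambda>j. freq j * y / (2 * pi))"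

definition char_freq :: "'a set \<Rightarrow> ('a \<Rightarrow> real) \<Rightarrow> ('a \<Rightarrow> int) \<Rightarrow> real" where
  "char_freq J freq k = (\<Sum>j\<in>J. of_int (k j) * freq j)"

lemma norm_torus_char [simp]: "norm (torus_char J k x) = 1"
  by (simp add: torus_char_def)

lemma torus_char_zero: "torus_char J (\<lambda>_. 0) x = 1"
  by (simp add: torus_char_def)

lemma torus_char_mult: "torus_char J k x * torus_char J l x = torus_char J (\<lambda>j. k j + l j) x"
  by (simp add: torus_char_def distrib_left sum.distrib exp_add[symmetric] algebra_simps)

lemma torus_char_add: "torus_char J k (\<lambda>j. x j + y j) = torus_char J k x * torus_char J k y"
  by (simp add: torus_char_def distrib_left sum.distrib exp_add)

lemma torus_char_cong:
  assumes "\<And>j. j \<in> J \<Longrightarrow> x j - y j \<in> \<int>"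
  shows "torus_char J k x = torus_char J k y"
proof -
  define d where "d = (\<Sum>j\<in>J. of_int (k j) * (x j - y j))"
  have d: "d \<in> \<int>"
    unfolding d_def using assms by (intro Ints_sum Ints_mult) auto
  have "(\<Sum>j\<in>J. of_int (k j) * x j) = (\<Sum>j\<in>J. of_int (k j) * y j) + d"
    by (simp add: d_def sum.distrib[symmetric] algebra_simps)
  moreover have "iexp (2 * pi * d) = 1"
    using d cis_multiple_2pi[of d] by (simp add: cis_conv_exp)
  ultimately show ?thesis
    by (simp add: torus_char_def distrib_left exp_add)
qed

lemma torus_char_torus_add: "torus_char J k (torus_add J a x) = torus_char J k x * torus_char J k a"
proof -
  have "torus_char J k (torus_add J a x) = torus_char J k (\<lambda>j. x j + a j)"
    by (rule torus_char_cong) (simp add: torus_add_def frac_def)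
  then show ?thesis by (simp add: torus_char_add)
qed

lemma torus_char_line: "torus_char J k (torus_line freq y) = iexp (char_freq J freq k * y)"
proof -
  have "2 * pi * (\<Sum>j\<in>J. of_int (k j) * (freq j * y / (2 * pi))) = char_freq J freq k * y"
    by (simp add: char_freq_def sum_distrib_left sum_distrib_right mult.assoc)
  then show ?thesis by (simp add: torus_char_def torus_line_def)
qed

lemma norm_torus_char_diff_le:
  "norm (torus_char J k x - torus_char J k y)
     \<le> 2 * pi * (\<Sum>j\<in>J. \<bar>of_int (k j)\<bar> * dist_int (x j - y j))"
proof -
  define r where "r j = (x j - y j) - of_int (round (x j - y j))" for j
  have "torus_char J k x = torus_char J k (\<lambda>j. y j + r j)"
    by (rule torus_char_cong) (simp add: r_def)
  also have "\<dots> = torus_char J k y * torus_char J k r"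
    by (rule torus_char_add)
  finally have "torus_char J k x - torus_char J k y = torus_char J k y * (torus_char J k r - 1)"
    by (simp add: algebra_simps)
  then have "norm (torus_char J k x - torus_char J k y) = norm (torus_char J k r - 1)"
    by (simp add: norm_mult)
  also have "\<dots> \<le> \<bar>2 * pi * (\<Sum>j\<in>J. of_int (k j) * r j)\<bar>"
    using iexp_approx1[of "2 * pi * (\<Sum>j\<in>J. of_int (k j) * r j)" 0]
    by (simp add: torus_char_def)
  also have "\<dots> \<le> 2 * pi * (\<Sum>j\<in>J. \<bar>of_int (k j) * r j\<bar>)"
    using sum_abs[of "\<lambda>j. of_int (k j) * r j" J] by (simp add: abs_mult)
  also have "\<dots> = 2 * pi * (\<Sum>j\<in>J. \<bar>of_int (k j)\<bar> * dist_int (x j - y j))"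
    by (simp add: r_def dist_int_def abs_mult)
  finally show ?thesis .
qed

lemma borel_measurable_torus_char [measurable]:
  assumes "finite J"
  shows "torus_char J k \<in> borel_measurable (torus_borel J)"
proof -
  have [measurable]: "(\<lambda>x. \<Sum>j\<in>J. of_int (k j) * x j)
      \<in> borel_measurable (PiM J (\<lambda>_. borel :: real measure))"
    by measurable
  show ?thesis unfolding torus_char_def torus_borel_def by measurable
qed

section \<open>Haar probability measures on subgroups of the torus\<close>

lemma is_haar_probD:
  assumes "is_haar_prob J A \<mu>"
  shows "sets \<mu> = sets (torus_borel J)" "prob_space \<mu>" "A \<in> sets \<mu>" "AE x in \<mu>. x \<in> A"
    "\<And>a. a \<in> A \<Longrightarrow> distr \<mu> (torus_borel J) (torus_add J a) = \<mu>"
proof -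
  show "sets \<mu> = sets (torus_borel J)" and prob: "prob_space \<mu>" and A: "A \<in> sets \<mu>"
    and "\<And>a. a \<in> A \<Longrightarrow> distr \<mu> (torus_borel J) (torus_add J a) = \<mu>"
    using assms by (auto simp: is_haar_prob_def)
  have "emeasure \<mu> A = 1" using assms by (simp add: is_haar_prob_def)
  then show "AE x in \<mu>. x \<in> A"
    using prob_space.AE_in_set_eq_1[OF prob A] by (simp add: measure_def)
qed

lemma measurable_is_haar_prob:
  "is_haar_prob J A \<mu> \<Longrightarrow> measurable \<mu> N = measurable (torus_borel J) N"
  by (rule measurable_cong_sets[OF is_haar_probD(1) refl])

lemma torus_add_measurable [measurable]:
  "torus_add J a \<in> measurable (torus_borel J) (torus_borel J)"
  unfolding torus_add_def torus_borel_def by measurable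

lemma emeasure_torus_add_vimage_haar:
  assumes "is_haar_prob J A \<mu>" "a \<in> A" "B \<in> sets (torus_borel J)"
  shows "emeasure \<mu> (torus_add J a -` B \<inter> space \<mu>) = emeasure \<mu> B"
proof -
  have "emeasure \<mu> (torus_add J a -` B \<inter> space \<mu>)
      = emeasure (distr \<mu> (torus_borel J) (torus_add J a)) B"
    using assms(3) by (simp add: emeasure_distr measurable_is_haar_prob[OF assms(1)])
  then show ?thesis using is_haar_probD(5)[OF assms(1,2)] by simp
qed

text \<open>Both measures are concentrated on \<open>A\<close> and invariant under translations by \<open>A\<close>, so
  evaluating the \<open>\<mu> \<Otimes> \<nu>\<close>-measure of the preimage of \<open>B\<close> under addition with
  either order of integration gives \<open>\<nu> B\<close> and \<open>\<mu> B\<close>.\<close>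

lemma is_haar_prob_unique:
  assumes \<mu>: "is_haar_prob J A \<mu>" and \<nu>: "is_haar_prob J A \<nu>"
  shows "\<mu> = \<nu>"
proof (rule measure_eqI)
  note M = is_haar_probD[OF \<mu>] and N = is_haar_probD[OF \<nu>]
  interpret M: prob_space \<mu> by (rule M(2))
  interpret N: prob_space \<nu> by (rule N(2))
  interpret P: pair_sigma_finite \<mu> \<nu> ..
  show "sets \<mu> = sets \<nu>" using M(1) N(1) by simp
  fix B assume "B \<in> sets \<mu>"
  then have B: "B \<in> sets (torus_borel J)" using M(1) by simp
  have "(\<lambda>p. torus_add J (fst p) (snd p)) \<in> measurable (torus_borel J \<Otimes>\<^sub>M torus_borel J) (torus_borel J)"
    unfolding torus_add_def torus_borel_def by measurable
  then have "(\<lambda>p. torus_add J (fst p) (snd p)) \<in> measurable (\<mu> \<Otimes>\<^sub>M \<nu>) (torus_borel J)"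
    by (simp add: measurable_cong_sets[OF sets_pair_measure_cong[OF M(1) N(1)] refl])
  then have S: "(\<lambda>p. torus_add J (fst p) (snd p)) -` B \<inter> space (\<mu> \<Otimes>\<^sub>M \<nu>) \<in> sets (\<mu> \<Otimes>\<^sub>M \<nu>)"
    (is "?S \<in> _")
    using B by (rule measurable_sets)
  have space: "space \<mu> = space (torus_borel J)" "space \<nu> = space (torus_borel J)"
    using sets_eq_imp_space_eq[OF M(1)] sets_eq_imp_space_eq[OF N(1)] by simp_all
  then have A: "A \<subseteq> space \<mu>" "A \<subseteq> space \<nu>"
    using M(3) N(3) sets.sets_into_space by blast+
  have "emeasure \<nu> B = (\<integral>\<^sup>+x. emeasure \<nu> (torus_add J x -` B \<inter> space \<nu>) \<partial>\<mu>)"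
    using M(4) emeasure_torus_add_vimage_haar[OF \<nu> _ B]
    by (subst nn_integral_cong_AE[where v = "\<lambda>_. emeasure \<nu> B"]) (auto simp: M.emeasure_space_1)
  also have "\<dots> = emeasure (\<mu> \<Otimes>\<^sub>M \<nu>) ?S"
    using N.emeasure_pair_measure_alt[OF S] A(1)
    by (auto simp: space_pair_measure space intro!: nn_integral_cong arg_cong2[where f = emeasure])
  also have "\<dots> = (\<integral>\<^sup>+y. emeasure \<mu> (torus_add J y -` B \<inter> space \<mu>) \<partial>\<nu>)"
    using P.emeasure_pair_measure_alt2[OF S] A(2)
    by (auto simp: space_pair_measure space torus_add_def add.commute
        intro!: nn_integral_cong arg_cong2[where f = emeasure])
  also have "\<dots> = emeasure \<mu> B"
    using N(4) emeasure_torus_add_vimage_haar[OF \<mu> _ B]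
    by (subst nn_integral_cong_AE[where v = "\<lambda>_. emeasure \<mu> B"]) (auto simp: N.emeasure_space_1)
  finally show "emeasure \<mu> B = emeasure \<nu> B" by simp
qed

lemma haar_prob_eqI: "is_haar_prob J A \<mu> \<Longrightarrow> haar_prob J A = \<mu>"
  unfolding haar_prob_def using is_haar_prob_unique by blast

lemma integrable_is_haar_prob_bounded:
  fixes F :: "('a \<Rightarrow> real) \<Rightarrow> 'b::{banach, second_countable_topology}"
  assumes "is_haar_prob J A \<mu>" "F \<in> borel_measurable (torus_borel J)" "\<And>x. norm (F x) \<le> C"
  shows "integrable \<mu> F"
proof -
  interpret prob_space \<mu> by (rule is_haar_probD(2)[OF assms(1)])
  show ?thesis
    using assms by (intro integrable_const_bound[where B = C]) (auto simp: measurable_is_haar_prob)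
qed

lemma integral_torus_char_haar:
  assumes \<mu>: "is_haar_prob J A \<mu>" and J: "finite J"
  shows "(\<integral>x. torus_char J k x \<partial>\<mu>) = (if \<forall>a\<in>A. torus_char J k a = 1 then 1 else 0)"
proof -
  note H = is_haar_probD[OF \<mu>]
  interpret prob_space \<mu> by (rule H(2))
  let ?I = "\<integral>x. torus_char J k x \<partial>\<mu>"
  show ?thesis
  proof (cases "\<forall>a\<in>A. torus_char J k a = 1")
    case True
    have "?I = (\<integral>x. 1 \<partial>\<mu>)"
      using H(4) True by (intro integral_cong_AE) (auto simp: measurable_is_haar_prob[OF \<mu>] J)
    then show ?thesis using True by (simp add: prob_space)
  next
    case False
    then obtain a where a: "a \<in> A" "torus_char J k a \<noteq> 1" by blast
    have "?I = (\<integral>x. torus_char J k x \<partial>distr \<mu> (torus_borel J) (torus_add J a))"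
      using H(5)[OF a(1)] by simp
    also have "\<dots> = (\<integral>x. torus_char J k (torus_add J a x) \<partial>\<mu>)"
      by (rule integral_distr) (auto simp: measurable_is_haar_prob[OF \<mu>] J)
    also have "\<dots> = torus_char J k a * ?I"
      by (simp add: torus_char_torus_add mult.commute)
    finally have "(1 - torus_char J k a) * ?I = 0" by (simp add: algebra_simps)
    then show ?thesis using a False by simp
  qed
qed

section \<open>Characters on the closure of a line\<close>

lemma frac_torus_line_in_orbit_closure:
  "(\<lambda>j\<in>J. frac (torus_line freq y j)) \<in> orbit_closure J freq"
proof -
  have "dist_mod1 (frac (freq j * y / (2 * pi))) (freq j * y / (2 * pi)) = 0" for j
    by (simp add: dist_mod1_eq_dist_int dist_int_eq_0_iff frac_def)
  then show ?thesis
    unfolding orbit_closure_def torus_pts_def torus_line_def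
    by (auto simp: frac_lt_1 intro!: exI[of _ y])
qed

lemma torus_char_eq_1_on_orbit_closure:
  assumes "char_freq J freq k = 0" and a: "a \<in> orbit_closure J freq"
  shows "torus_char J k a = 1"
proof -
  define K where "K = 2 * pi * (\<Sum>j\<in>J. \<bar>real_of_int (k j)\<bar>)"
  have K: "K \<ge> 0" by (simp add: K_def sum_nonneg)
  have bound: "norm (torus_char J k a - 1) \<le> K * e" if "e > 0" for e
  proof -
    obtain y where y: "\<And>j. j \<in> J \<Longrightarrow> dist_int (a j - torus_line freq y j) < e"
      using a \<open>e > 0\<close> unfolding orbit_closure_def dist_mod1_eq_dist_int torus_line_def
      by blast
    have "norm (torus_char J k a - 1) = norm (torus_char J k a - torus_char J k (torus_line freq y))"
      using assms(1) by (simp add: torus_char_line)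
    also have "\<dots> \<le> 2 * pi * (\<Sum>j\<in>J. \<bar>of_int (k j)\<bar> * dist_int (a j - torus_line freq y j))"
      by (rule norm_torus_char_diff_le)
    also have "\<dots> \<le> 2 * pi * (\<Sum>j\<in>J. \<bar>of_int (k j)\<bar> * e)"
      using y by (intro mult_left_mono sum_mono) (auto intro: less_imp_le)
    finally show ?thesis by (simp add: K_def sum_distrib_right mult.assoc)
  qed
  have "norm (torus_char J k a - 1) \<le> 0 + e" if "e > 0" for e
  proof -
    have "K * (e / (K + 1)) \<le> e"
      using K \<open>e > 0\<close> by (simp add: field_simps)
    then show ?thesis using bound[of "e / (K + 1)"] K \<open>e > 0\<close> by simp
  qed
  then have "norm (torus_char J k a - 1) \<le> 0"
    by (rule field_le_epsilon)
  then show ?thesis by simp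
qed

lemma torus_char_orbit_closure_eq_1_iff:
  "(\<forall>a\<in>orbit_closure J freq. torus_char J k a = 1) \<longleftrightarrow> char_freq J freq k = 0"
proof
  assume trivial: "\<forall>a\<in>orbit_closure J freq. torus_char J k a = 1"
  show "char_freq J freq k = 0"
  proof (rule ccontr)
    assume nz: "char_freq J freq k \<noteq> 0"
    define y where "y = pi / char_freq J freq k"
    have "torus_char J k (\<lambda>j\<in>J. frac (torus_line freq y j)) = torus_char J k (torus_line freq y)"
      by (rule torus_char_cong) (simp add: frac_def)
    also have "\<dots> = -1"
      using nz by (simp add: torus_char_line y_def cis_conv_exp[symmetric])
    finally show False
      using trivial frac_torus_line_in_orbit_closure[where J = J and freq = freq and y = y] by force
  qed
qed (use torus_char_eq_1_on_orbit_closure in blast)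

section \<open>Time averages\<close>

definition time_average :: "real \<Rightarrow> (real \<Rightarrow> complex) \<Rightarrow> real \<Rightarrow> complex" where
  "time_average \<eta>0 g Y = integral {\<eta>0..Y} g / complex_of_real Y"

lemma time_average_scale: "time_average \<eta>0 (\<lambda>y. c * g y) Y = c * time_average \<eta>0 g Y"
  by (simp add: time_average_def)

lemma time_average_add:
  assumes "continuous_on UNIV f" "continuous_on UNIV g"
  shows "time_average \<eta>0 (\<lambda>y. f y + g y) Y = time_average \<eta>0 f Y + time_average \<eta>0 g Y"
proof -
  have "f integrable_on {\<eta>0..Y}" "g integrable_on {\<eta>0..Y}"
    by (intro integrable_continuous_real continuous_on_subset[OF assms(1)]
        continuous_on_subset[OF assms(2)]; simp)+
  then show ?thesis by (simp add: time_average_def integral_add add_divide_distrib)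
qed

lemma has_integral_iexp_mult:
  assumes "l \<noteq> 0" "a \<le> b"
  shows "((\<lambda>y. iexp (l * y)) has_integral (iexp (l * b) - iexp (l * a)) / (\<i> * l)) {a..b}"
  unfolding diff_divide_distrib
proof (rule fundamental_theorem_of_calculus[OF assms(2)])
  fix x
  define c where "c = \<i> * complex_of_real l"
  have "((\<lambda>z. exp (c * z) / c) has_field_derivative exp (c * complex_of_real x)) (at (complex_of_real x))"
    using assms(1) by (auto intro!: derivative_eq_intros simp: c_def)
  then have "((\<lambda>y. exp (c * complex_of_real y) / c) has_vector_derivative exp (c * complex_of_real x))
      (at x)"
    by (rule has_vector_derivative_real_field)
  then show "((\<lambda>y. iexp (l * y) / (\<i> * l)) has_vector_derivative iexp (l * x)) (at x within {a..b})"
    by (simp add: c_def mult.assoc has_vector_derivative_at_within)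
qed

lemma norm_integral_iexp_mult_le:
  assumes "l \<noteq> 0" "a \<le> b"
  shows "norm (integral {a..b} (\<lambda>y. iexp (l * y))) \<le> 2 / \<bar>l\<bar>"
proof -
  have "norm (iexp (l * b) - iexp (l * a)) \<le> 2"
    using norm_triangle_ineq4[of "iexp (l * b)" "iexp (l * a)"] by simp
  then show ?thesis
    using integral_unique[OF has_integral_iexp_mult[OF assms]] assms(1)
    by (simp add: norm_divide norm_mult divide_right_mono)
qed

lemma tendsto_time_average_iexp:
  "(time_average \<eta>0 (\<lambda>y. iexp (l * y)) \<longlongrightarrow> (if l = 0 then 1 else 0)) at_top"
proof (cases "l = 0")
  case True
  have "\<forall>\<^sub>F Y in at_top. complex_of_real (1 - \<eta>0 / Y) = time_average \<eta>0 (\<lambda>y. iexp (l * y)) Y"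
    using eventually_ge_at_top[of \<eta>0] eventually_gt_at_top[of 0]
  proof eventually_elim
    case (elim Y)
    then have "1 - \<eta>0 / Y = (Y - \<eta>0) / Y" by (simp add: diff_divide_distrib)
    then show ?case
      using elim True by (simp add: time_average_def scaleR_conv_of_real)
  qed
  moreover have "((\<lambda>Y. complex_of_real (1 - \<eta>0 / Y)) \<longlongrightarrow> complex_of_real 1) at_top"
    by (intro tendsto_of_real) real_asymp
  ultimately show ?thesis
    using True by (simp add: Lim_transform_eventually)
next
  case False
  have "\<forall>\<^sub>F Y in at_top. norm (time_average \<eta>0 (\<lambda>y. iexp (l * y)) Y) \<le> (2 / \<bar>l\<bar>) * inverse Y"
    using eventually_ge_at_top[of \<eta>0] eventually_gt_at_top[of 0]
  proof eventually_elim
    case (elim Y)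
    have "norm (time_average \<eta>0 (\<lambda>y. iexp (l * y)) Y) = norm (integral {\<eta>0..Y} (\<lambda>y. iexp (l * y))) / Y"
      using elim(2) by (simp add: time_average_def norm_divide)
    also have "\<dots> \<le> (2 / \<bar>l\<bar>) / Y"
      using elim(2) by (intro divide_right_mono norm_integral_iexp_mult_le[OF False elim(1)]) simp
    finally show ?case by (simp add: divide_inverse)
  qed
  moreover have "((\<lambda>Y. (2 / \<bar>l\<bar>) * inverse Y) \<longlongrightarrow> (2 / \<bar>l\<bar>) * 0) at_top"
    by (intro tendsto_mult tendsto_const tendsto_inverse_0_at_top filterlim_ident)
  ultimately show ?thesis
    using False Lim_null_comparison by simp
qed

lemma norm_time_average_diff_le:
  assumes f: "continuous_on UNIV f" and g: "continuous_on UNIV g"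
    and "0 \<le> \<eta>0" "\<eta>0 \<le> Y" "0 < Y" and fg: "\<forall>y. norm (f y - g y) \<le> \<delta>"
  shows "norm (time_average \<eta>0 f Y - time_average \<eta>0 g Y) \<le> \<delta>"
proof -
  have "continuous_on {\<eta>0..Y} (\<lambda>y. f y - g y)"
    by (intro continuous_intros continuous_on_subset[OF f] continuous_on_subset[OF g]) auto
  then have "norm (integral {\<eta>0..Y} (\<lambda>y. f y - g y)) \<le> \<delta> * (Y - \<eta>0)"
    using fg assms(4) by (intro integral_bound) auto
  also have "\<dots> \<le> \<delta> * Y"
  proof (rule mult_left_mono)
    show "0 \<le> \<delta>" using fg norm_ge_zero order_trans by blast
  qed (use assms(3) in simp)
  finally have "norm (integral {\<eta>0..Y} (\<lambda>y. f y - g y)) / Y \<le> \<delta>"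
    using assms(5) by (simp add: divide_le_eq)
  moreover have "f integrable_on {\<eta>0..Y}" "g integrable_on {\<eta>0..Y}"
    by (intro integrable_continuous_real continuous_on_subset[OF f] continuous_on_subset[OF g];
        simp)+
  ultimately show ?thesis
    using assms(5) by (simp add: time_average_def integral_diff norm_divide diff_divide_distrib[symmetric])
qed

lemma tendsto_time_average_uniform_approx:
  fixes F :: "'a \<Rightarrow> complex" and f :: "real \<Rightarrow> complex"
  assumes \<mu>: "prob_space \<mu>" and \<eta>0: "0 \<le> \<eta>0"
    and F: "integrable \<mu> F" and f: "continuous_on UNIV f"
    and approx: "\<And>\<epsilon>. \<epsilon> > 0 \<Longrightarrow> \<exists>G g. integrable \<mu> G \<and> continuous_on UNIV g \<and>
        (\<forall>x\<in>space \<mu>. norm (F x - G x) \<le> \<epsilon>) \<and> (\<forall>y. norm (f y - g y) \<le> \<epsilon>) \<and>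
        (time_average \<eta>0 g \<longlongrightarrow> (\<integral>x. G x \<partial>\<mu>)) at_top"
  shows "(time_average \<eta>0 f \<longlongrightarrow> (\<integral>x. F x \<partial>\<mu>)) at_top"
proof (rule tendstoI)
  interpret prob_space \<mu> by (rule \<mu>)
  fix \<epsilon> :: real assume "\<epsilon> > 0"
  then obtain G g where G: "integrable \<mu> G" and g: "continuous_on UNIV g"
    and FG: "\<forall>x\<in>space \<mu>. norm (F x - G x) \<le> \<epsilon> / 3"
    and fg: "\<forall>y. norm (f y - g y) \<le> \<epsilon> / 3"
    and lim: "(time_average \<eta>0 g \<longlongrightarrow> (\<integral>x. G x \<partial>\<mu>)) at_top"
    using approx[of "\<epsilon> / 3"] by auto
  have space_avg: "norm ((\<integral>x. F x \<partial>\<mu>) - (\<integral>x. G x \<partial>\<mu>)) \<le> \<epsilon> / 3"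
  proof -
    have "(\<integral>x. F x \<partial>\<mu>) - (\<integral>x. G x \<partial>\<mu>) = (\<integral>x. F x - G x \<partial>\<mu>)"
      using F G by simp
    also have "norm \<dots> \<le> (\<integral>x. norm (F x - G x) \<partial>\<mu>)"
      by (rule integral_norm_bound)
    also have "\<dots> \<le> (\<integral>x. \<epsilon> / 3 \<partial>\<mu>)"
      by (rule Bochner_Integration.integral_mono) (use F G FG in auto)
    finally show ?thesis by (simp add: prob_space)
  qed
  have "\<forall>\<^sub>F Y in at_top. dist (time_average \<eta>0 g Y) (\<integral>x. G x \<partial>\<mu>) < \<epsilon> / 3"
    by (rule tendstoD[OF lim]) (use \<open>\<epsilon> > 0\<close> in simp)
  then show "\<forall>\<^sub>F Y in at_top. dist (time_average \<eta>0 f Y) (\<integral>x. F x \<partial>\<mu>) < \<epsilon>"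
    using eventually_ge_at_top[of \<eta>0] eventually_gt_at_top[of 0]
  proof eventually_elim
    case (elim Y)
    have "dist (time_average \<eta>0 f Y) (\<integral>x. F x \<partial>\<mu>)
        \<le> dist (time_average \<eta>0 f Y) (time_average \<eta>0 g Y)
          + dist (time_average \<eta>0 g Y) (\<integral>x. G x \<partial>\<mu>)
          + dist (\<integral>x. G x \<partial>\<mu>) (\<integral>x. F x \<partial>\<mu>)"
      using dist_triangle[of "time_average \<eta>0 f Y" "\<integral>x. F x \<partial>\<mu>" "time_average \<eta>0 g Y"]
        dist_triangle[of "time_average \<eta>0 g Y" "\<integral>x. F x \<partial>\<mu>" "\<integral>x. G x \<partial>\<mu>"]
      by linarith
    then show ?case
      using elim norm_time_average_diff_le[OF f g \<eta>0 elim(2,3) fg] space_avg by (simp add: dist_norm norm_minus_commute)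
  qed
qed

section \<open>Trigonometric polynomials on the torus\<close>

inductive trig_poly :: "'a set \<Rightarrow> (('a \<Rightarrow> real) \<Rightarrow> complex) \<Rightarrow> bool" for J where
  trig_poly_char: "trig_poly J (torus_char J k)"
| trig_poly_scale: "trig_poly J F \<Longrightarrow> trig_poly J (\<lambda>x. c * F x)"
| trig_poly_add: "trig_poly J F \<Longrightarrow> trig_poly J G \<Longrightarrow> trig_poly J (\<lambda>x. F x + G x)"

lemma trig_poly_const: "trig_poly J (\<lambda>x. c)"
  using trig_poly_scale[OF trig_poly_char, of J c "\<lambda>_. 0"] by (simp add: torus_char_zero)

lemma trig_poly_sum:
  "finite S \<Longrightarrow> (\<And>i. i \<in> S \<Longrightarrow> trig_poly J (F i)) \<Longrightarrow> trig_poly J (\<lambda>x. \<Sum>i\<in>S. F i x)"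
  by (induction S rule: finite_induct) (auto intro: trig_poly_const trig_poly_add)

lemma trig_poly_mult_char:
  assumes "trig_poly J F"
  shows "trig_poly J (\<lambda>x. F x * torus_char J l x)"
  using assms
proof (induction rule: trig_poly.induct)
  case (trig_poly_char k)
  then show ?case by (simp add: torus_char_mult trig_poly.trig_poly_char)
next
  case (trig_poly_scale F c)
  then show ?case using trig_poly.trig_poly_scale[of J _ c] by (simp add: mult.assoc)
next
  case (trig_poly_add F G)
  then show ?case using trig_poly.trig_poly_add by (simp add: distrib_right)
qed

lemma trig_poly_mult:
  assumes "trig_poly J G" "trig_poly J F"
  shows "trig_poly J (\<lambda>x. F x * G x)"
  using assms
proof (induction rule: trig_poly.induct)
  case (trig_poly_char k)
  then show ?case by (rule trig_poly_mult_char)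
next
  case (trig_poly_scale G c)
  then show ?case using trig_poly.trig_poly_scale[of J _ c] by (simp add: algebra_simps)
next
  case (trig_poly_add G1 G2)
  then show ?case using trig_poly.trig_poly_add by (simp add: distrib_left)
qed

lemma trig_poly_real_polynomial_function:
  assumes "real_polynomial_function p" "trig_poly J (\<lambda>x. complex_of_real (V x))"
  shows "trig_poly J (\<lambda>x. complex_of_real (p (V x)))"
  using assms(1)
proof (induction rule: real_polynomial_function.induct)
  case (linear f)
  then obtain c where "f = (\<lambda>x. x * c)" using real_bounded_linear by blast
  then show ?case
    using trig_poly_scale[OF assms(2), of "complex_of_real c"] by (simp add: mult.commute)
next
  case (const c)
  then show ?case by (rule trig_poly_const)
next
  case (add f g)
  then show ?case using trig_poly_add by fastforce
next
  case (mult f g)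
  then show ?case using trig_poly_mult by fastforce
qed

lemma trig_poly_polynomial_function:
  assumes "polynomial_function (p :: real \<Rightarrow> complex)" "trig_poly J (\<lambda>x. complex_of_real (V x))"
  shows "trig_poly J (\<lambda>x. p (V x))"
proof -
  have "real_polynomial_function (Re \<circ> p)" "real_polynomial_function (Im \<circ> p)"
    using assms(1) unfolding polynomial_function_def
    by (auto intro: bounded_linear_Re bounded_linear_Im)
  then have "trig_poly J (\<lambda>x. complex_of_real ((Re \<circ> p) (V x)) + \<i> * complex_of_real ((Im \<circ> p) (V x)))"
    by (intro trig_poly_add trig_poly_scale trig_poly_real_polynomial_function[OF _ assms(2)])
  moreover have "(\<lambda>x. complex_of_real ((Re \<circ> p) (V x)) + \<i> * complex_of_real ((Im \<circ> p) (V x)))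
      = (\<lambda>x. p (V x))"
    by (auto simp: complex_eq_iff)
  ultimately show ?thesis by simp
qed

lemma trig_poly_Re_exp_coord:
  assumes J: "finite J" and j: "j \<in> J"
  shows "trig_poly J (\<lambda>x. complex_of_real (Re (z * exp (2 * pi * \<i> * complex_of_real (x j)))))"
proof -
  have char_coord: "torus_char J (\<lambda>i. if i = j then c else 0) x = exp (2 * pi * \<i> * of_int c * x j)"
    for c x
  proof -
    have "(\<Sum>i\<in>J. of_int (if i = j then c else 0) * x i) = (\<Sum>i\<in>J. if i = j then of_int c * x j else 0)"
      by (rule sum.cong) auto
    also have "\<dots> = of_int c * x j"
      using J j by simp
    finally
    show ?thesis by (simp add: torus_char_def mult_ac)
  qed
  have e1: "exp (2 * pi * \<i> * complex_of_real (x j)) = torus_char J (\<lambda>i. if i = j then 1 else 0) x"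
    for x using char_coord[of 1 x] by simp
  have e2: "cnj (exp (2 * pi * \<i> * complex_of_real (x j)))
      = torus_char J (\<lambda>i. if i = j then -1 else 0) x" for x
    using char_coord[of "-1" x] by (simp add: exp_cnj)
  have "complex_of_real (Re (z * exp (2 * pi * \<i> * complex_of_real (x j))))
      = (z / 2) * torus_char J (\<lambda>i. if i = j then 1 else 0) x
        + (cnj z / 2) * torus_char J (\<lambda>i. if i = j then -1 else 0) x" for x
  proof -
    let ?w = "z * exp (2 * pi * \<i> * complex_of_real (x j))"
    have "complex_of_real (Re ?w) = (?w + cnj ?w) / 2"
      by (subst complex_add_cnj) simp
    then show ?thesis
      by (simp only: complex_cnj_mult e2 e1[symmetric]) (simp add: field_simps)
  qed
  then show ?thesis
    by (simp only:) (intro trig_poly_add trig_poly_scale trig_poly_char)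
qed

lemma trig_poly_bounded: "trig_poly J F \<Longrightarrow> \<exists>C. \<forall>x. norm (F x) \<le> C"
proof (induction rule: trig_poly.induct)
  case (trig_poly_scale F c)
  then obtain C where "\<forall>x. norm (F x) \<le> C" by blast
  then show ?case by (auto simp: norm_mult intro!: exI[of _ "norm c * C"] mult_left_mono)
next
  case (trig_poly_add F G)
  then obtain C D where "\<forall>x. norm (F x) \<le> C" "\<forall>x. norm (G x) \<le> D" by blast
  then show ?case by (auto intro!: exI[of _ "C + D"] norm_triangle_le add_mono)
qed auto

lemma trig_poly_measurable:
  assumes "finite J" "trig_poly J F"
  shows "F \<in> borel_measurable (torus_borel J)"
  using assms(2) by (induction rule: trig_poly.induct) (simp_all add: assms(1))

lemma trig_poly_continuous_on_line:
  "trig_poly J F \<Longrightarrow> continuous_on UNIV (\<lambda>y. F (torus_line freq y))"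
  by (induction rule: trig_poly.induct) (simp_all add: torus_char_line continuous_intros)

lemma tendsto_time_average_trig_poly:
  assumes \<mu>: "is_haar_prob J (orbit_closure J freq) \<mu>" and J: "finite J" and F: "trig_poly J F"
  shows "(time_average \<eta>0 (\<lambda>y. F (torus_line freq y)) \<longlongrightarrow> (\<integral>x. F x \<partial>\<mu>)) at_top"
  using F
proof (induction rule: trig_poly.induct)
  case (trig_poly_char k)
  show ?case
    using tendsto_time_average_iexp[of \<eta>0 "char_freq J freq k"]
    by (simp add: torus_char_line integral_torus_char_haar[OF \<mu> J]
        torus_char_orbit_closure_eq_1_iff)
next
  case (trig_poly_scale F c)
  then show ?case by (simp add: time_average_scale tendsto_mult_left)
next
  case (trig_poly_add F G)
  have "integrable \<mu> H" if H: "trig_poly J H" for H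
  proof -
    obtain C where "\<forall>x. norm (H x) \<le> C" using trig_poly_bounded[OF H] by blast
    then show ?thesis
      using integrable_is_haar_prob_bounded[OF \<mu> trig_poly_measurable[OF J H]] by blast
  qed
  then have "integrable \<mu> F" "integrable \<mu> G"
    using trig_poly_add.hyps by blast+
  then show ?case
    using trig_poly_add
    by (simp add: time_average_add trig_poly_continuous_on_line tendsto_add)
qed

lemma borel_measurable_real_trig_poly:
  assumes "finite J" "trig_poly J (\<lambda>x. complex_of_real (V x))"
  shows "V \<in> borel_measurable (torus_borel J)"
proof -
  have "(\<lambda>x. Re (complex_of_real (V x))) \<in> borel_measurable (torus_borel J)"
    using trig_poly_measurable[OF assms] by measurable
  then show ?thesis by simp
qed

lemma real_trig_poly_bounded:
  assumes "trig_poly J (\<lambda>x. complex_of_real (V x))"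
  obtains M where "\<And>x. V x \<in> {-M..M}"
proof -
  obtain M where M: "\<forall>x. norm (complex_of_real (V x)) \<le> M"
    using trig_poly_bounded[OF assms] by blast
  have "V x \<in> {-M..M}" for x
    using M[rule_format, of x] by (simp add: abs_le_iff)
  then show thesis by (rule that)
qed

lemma integrable_comp_real_trig_poly:
  fixes V :: "('a \<Rightarrow> real) \<Rightarrow> real" and g :: "real \<Rightarrow> complex"
  assumes \<mu>: "is_haar_prob J A \<mu>" and J: "finite J"
    and V: "trig_poly J (\<lambda>x. complex_of_real (V x))" and g: "continuous_on UNIV g"
  shows "integrable \<mu> (\<lambda>x. g (V x))"
proof -
  obtain M where "\<And>x. V x \<in> {-M..M}"
    using real_trig_poly_bounded[OF V] by blast
  moreover have "bounded (g ` {-M..M})"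
    using compact_imp_bounded[OF compact_continuous_image[OF continuous_on_subset[OF g subset_UNIV]]]
    by simp
  then obtain C where "\<forall>v\<in>g ` {-M..M}. norm v \<le> C"
    unfolding bounded_iff ..
  ultimately have "norm (g (V x)) \<le> C" for x by blast
  moreover have "(\<lambda>x. g (V x)) \<in> borel_measurable (torus_borel J)"
    using borel_measurable_continuous_onI[OF g] borel_measurable_real_trig_poly[OF J V] by measurable
  ultimately show ?thesis
    using integrable_is_haar_prob_bounded[OF \<mu>] by blast
qed

lemma tendsto_time_average_comp_real_trig_poly:
  fixes V :: "('a \<Rightarrow> real) \<Rightarrow> real" and h :: "real \<Rightarrow> complex"
  assumes \<mu>: "is_haar_prob J (orbit_closure J freq) \<mu>" and J: "finite J" and \<eta>0: "0 \<le> \<eta>0"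
    and V: "trig_poly J (\<lambda>x. complex_of_real (V x))" and h: "continuous_on UNIV h"
  shows "(time_average \<eta>0 (\<lambda>y. h (V (torus_line freq y))) \<longlongrightarrow> (\<integral>x. h (V x) \<partial>\<mu>)) at_top"
proof (rule tendsto_time_average_uniform_approx[OF is_haar_probD(2)[OF \<mu>] \<eta>0])
  obtain M where V_bounded: "\<And>x. V x \<in> {-M..M}"
    using real_trig_poly_bounded[OF V] by blast
  show "integrable \<mu> (\<lambda>x. h (V x))"
    by (rule integrable_comp_real_trig_poly[OF \<mu> J V h])
  have "continuous_on UNIV (\<lambda>y. V (torus_line freq y))"
    using continuous_on_Re[OF trig_poly_continuous_on_line[OF V]] by simp
  then show "continuous_on UNIV (\<lambda>y. h (V (torus_line freq y)))"
    using continuous_on_compose2[OF h] by simp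
  fix \<epsilon> :: real assume "\<epsilon> > 0"
  then obtain p where p: "polynomial_function p" "\<forall>u\<in>{-M..M}. norm (h u - p u) < \<epsilon>"
    using Stone_Weierstrass_polynomial_function[OF compact_Icc continuous_on_subset[OF h subset_UNIV]]
    by blast
  then have close: "\<forall>x. norm (h (V x) - p (V x)) \<le> \<epsilon>"
    using V_bounded by (simp add: less_imp_le)
  have p_trig: "trig_poly J (\<lambda>x. p (V x))"
    by (rule trig_poly_polynomial_function[OF p(1) V])
  show "\<exists>G g. integrable \<mu> G \<and> continuous_on UNIV g \<and>
      (\<forall>x\<in>space \<mu>. norm (h (V x) - G x) \<le> \<epsilon>) \<and>
      (\<forall>y. norm (h (V (torus_line freq y)) - g y) \<le> \<epsilon>) \<and>
      (time_average \<eta>0 g \<longlongrightarrow> (\<integral>x. G x \<partial>\<mu>)) at_top"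
  proof (intro exI conjI)
    show "integrable \<mu> (\<lambda>x. p (V x))"
      by (rule integrable_comp_real_trig_poly[OF \<mu> J V continuous_on_polymonial_function[OF p(1)]])
    show "continuous_on UNIV (\<lambda>y. p (V (torus_line freq y)))"
      by (rule trig_poly_continuous_on_line[OF p_trig])
    show "\<forall>x\<in>space \<mu>. norm (h (V x) - p (V x)) \<le> \<epsilon>"
      "\<forall>y. norm (h (V (torus_line freq y)) - p (V (torus_line freq y))) \<le> \<epsilon>"
      using close by blast+
    show "(time_average \<eta>0 (\<lambda>y. p (V (torus_line freq y))) \<longlongrightarrow> (\<integral>x. p (V x) \<partial>\<mu>)) at_top"
      by (rule tendsto_time_average_trig_poly[OF \<mu> J p_trig])
  qed
qed

section \<open>Kronecker's theorem for integrally independent families\<close>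

definition int_independent :: "('a \<Rightarrow> real) \<Rightarrow> 'a set \<Rightarrow> bool" where
  "int_independent w S \<longleftrightarrow> (\<forall>c::'a \<Rightarrow> int. (\<Sum>b\<in>S. of_int (c b) * w b) = 0 \<longrightarrow> (\<forall>b\<in>S. c b = 0))"

lemma rational_combination_if_not_int_independent_insert:
  assumes B: "finite B" "int_independent w B" and j: "j \<notin> B"
    and dep: "\<not> int_independent w (insert j B)"
  shows "\<exists>d r. d \<noteq> (0::int) \<and> of_int d * w j = (\<Sum>b\<in>B. of_int (r b) * w b)"
proof -
  obtain c where "(\<Sum>b\<in>insert j B. of_int (c b) * w b) = 0" and c: "\<exists>b\<in>insert j B. c b \<noteq> 0"
    using dep unfolding int_independent_def by auto
  then have sum: "of_int (c j) * w j + (\<Sum>b\<in>B. of_int (c b) * w b) = 0"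
    using B j by simp
  have "c j \<noteq> 0"
  proof
    assume "c j = 0"
    then have "\<forall>b\<in>B. c b = 0"
      using sum B(2) unfolding int_independent_def by auto
    then show False using c \<open>c j = 0\<close> by auto
  qed
  moreover have "of_int (- c j) * w j = (\<Sum>b\<in>B. of_int (c b) * w b)"
    using sum by simp
  ultimately show ?thesis by (intro exI[of _ "- c j"] exI[of _ c]) simp
qed

text \<open>A maximal integrally independent subfamily is a basis over \<open>\<rat>\<close>.\<close>

lemma ex_int_independent_rational_basis:
  assumes J: "finite J"
  obtains B where "B \<subseteq> J" "int_independent w B"
    "\<And>j. j \<in> J \<Longrightarrow> \<exists>d r. d \<noteq> (0::int) \<and> of_int d * w j = (\<Sum>b\<in>B. of_int (r b) * w b)"
proof -
  let ?F = "{S. S \<subseteq> J \<and> int_independent w S}"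
  have F: "finite ?F" "{} \<in> ?F"
    using J by (auto intro: finite_subset[of _ "Pow J"] simp: int_independent_def)
  then have "Max (card ` ?F) \<in> card ` ?F"
    by (intro Max_in) auto
  then obtain B where B: "B \<in> ?F" "card B = Max (card ` ?F)"
    by auto
  have finB: "finite B" using B J finite_subset by auto
  show thesis
  proof (rule that)
    show "B \<subseteq> J" "int_independent w B" using B by auto
    fix j assume j: "j \<in> J"
    show "\<exists>d r. d \<noteq> (0::int) \<and> of_int d * w j = (\<Sum>b\<in>B. of_int (r b) * w b)"
    proof (cases "j \<in> B")
      case True
      have "(\<Sum>b\<in>B. of_int (if b = j then 1 else 0) * w b) = (\<Sum>b\<in>B. if b = j then w j else 0)"
        by (rule sum.cong) auto
      then have "(\<Sum>b\<in>B. of_int (if b = j then 1 else 0) * w b) = w j"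
        using True finB by simp
      then show ?thesis by (intro exI[of _ 1] exI[of _ "\<lambda>b. if b = j then 1 else 0"]) simp
    next
      case False
      have "insert j B \<notin> ?F"
      proof
        assume "insert j B \<in> ?F"
        then have "card (insert j B) \<le> card B" using F B(2) by simp
        then show False using False finB by simp
      qed
      then show ?thesis
        using B j False finB by (intro rational_combination_if_not_int_independent_insert) auto
    qed
  qed
qed

text \<open>Dividing the rational basis by the common denominator \<open>\<Prod>\<^sub>j d\<^sub>j\<close> makes all coefficients
  integral.\<close>

lemma ex_int_independent_integer_basis:
  assumes J: "finite J"
  obtains B g n where "B \<subseteq> J" "int_independent g B"
    "\<And>j. j \<in> J \<Longrightarrow> w j = (\<Sum>b\<in>B. of_int (n j b) * g b)"
proof -
  obtain B where B: "B \<subseteq> J" "int_independent w B"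
    and rep: "\<And>j. j \<in> J \<Longrightarrow> \<exists>d r. d \<noteq> (0::int) \<and> of_int d * w j = (\<Sum>b\<in>B. of_int (r b) * w b)"
    by (rule ex_int_independent_rational_basis[OF J, where w=w]) blast
  obtain d r where dr: "\<And>j. j \<in> J \<Longrightarrow> d j \<noteq> 0"
      "\<And>j. j \<in> J \<Longrightarrow> of_int (d j) * w j = (\<Sum>b\<in>B. of_int (r j b) * w b)"
    using rep by metis
  define N where "N = (\<Prod>j\<in>J. d j)"
  have N0: "N \<noteq> 0" using dr J by (simp add: N_def)
  define g where "g b = w b / of_int N" for b
  define n where "n j b = (\<Prod>i\<in>J-{j}. d i) * r j b" for j b
  show thesis
  proof (rule that[of B g n])
    show "B \<subseteq> J" by fact
    show "int_independent g B" unfolding int_independent_def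
    proof (intro allI impI)
      fix c :: "'a \<Rightarrow> int" assume "(\<Sum>b\<in>B. of_int (c b) * g b) = 0"
      then have "(\<Sum>b\<in>B. of_int (c b) * w b) / of_int N = 0" by (simp add: g_def sum_divide_distrib)
      then have "(\<Sum>b\<in>B. of_int (c b) * w b) = 0" using N0 by simp
      then show "\<forall>b\<in>B. c b = 0" using B(2) unfolding int_independent_def by blast
    qed
    fix j assume j: "j \<in> J"
    have "of_int N * w j = of_int (\<Prod>i\<in>J-{j}. d i) * (of_int (d j) * w j)"
      using J j by (simp add: N_def prod.remove mult_ac)
    also have "\<dots> = of_int (\<Prod>i\<in>J-{j}. d i) * (\<Sum>b\<in>B. of_int (r j b) * w b)" using dr(2)[OF j] by simp
    also have "\<dots> = (\<Sum>b\<in>B. of_int (n j b) * w b)" by (simp add: n_def sum_distrib_left sum_distrib_right mult_ac)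
    finally have eq: "of_int N * w j = (\<Sum>b\<in>B. of_int (n j b) * w b)" .
    have "(\<Sum>b\<in>B. of_int (n j b) * g b) = (\<Sum>b\<in>B. of_int (n j b) * w b) / of_int N"
      by (simp add: g_def sum_divide_distrib)
    also have "\<dots> = w j" using eq N0 by (simp add: field_simps)
    finally show "w j = (\<Sum>b\<in>B. of_int (n j b) * g b)" by simp
  qed
qed

lemma inj_on_int_independent:
  assumes B: "finite B" and ind: "int_independent g B"
  shows "inj_on g B"
proof (rule inj_onI)
  fix b b' assume b: "b \<in> B" "b' \<in> B" and eq: "g b = g b'"
  show "b = b'"
  proof (rule ccontr)
    assume ne: "b \<noteq> b'"
    define c where "c x = (if x = b then 1 else if x = b' then -1 else (0::int))" for x
    have "(\<Sum>x\<in>B. of_int (c x) * g x) = (\<Sum>x\<in>B. (if x = b then g x else 0) - (if x = b' then g x else 0))"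
      by (rule sum.cong) (auto simp: c_def ne)
    also have "\<dots> = g b - g b'" using B b by (simp add: sum_subtractf)
    also have "\<dots> = 0" using eq by simp
    finally have "\<forall>x\<in>B. c x = 0" using ind unfolding int_independent_def by blast
    then have "c b = 0" using b by blast
    then show False by (simp add: c_def)
  qed
qed

lemma module_independent_int_independent:
  assumes B: "finite B" and ind: "int_independent g B"
  shows "module.independent (\<lambda>r. (*) (real_of_int r)) (g ` B)"
proof -
  interpret Modules.module "(\<lambda>r. (*) (real_of_int r))"
    by (simp add: Modules.module.intro distrib_left mult.commute)
  have inj: "inj_on g B" by (rule inj_on_int_independent[OF B ind])
  show ?thesis
    unfolding independent_explicit_module
  proof (intro allI impI)
    fix T u v
    assume T: "finite T" "T \<subseteq> g ` B" and sum: "(\<Sum>v\<in>T. real_of_int (u v) * v) = 0" and v: "v \<in> T"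
    define S where "S = {x\<in>B. g x \<in> T}"
    have gS: "g ` S = T" using T(2) by (auto simp: S_def)
    have "(\<Sum>x\<in>B. of_int (if g x \<in> T then u (g x) else 0) * g x)
        = (\<Sum>x\<in>B. if g x \<in> T then of_int (u (g x)) * g x else 0)"
      by (rule sum.cong) auto
    also have "\<dots> = (\<Sum>x\<in>S. of_int (u (g x)) * g x)"
      unfolding S_def using B by (simp add: sum.inter_filter)
    also have "\<dots> = (\<Sum>v\<in>T. real_of_int (u v) * v)"
      using sum.reindex[OF inj_on_subset[OF inj], of S "\<lambda>v. real_of_int (u v) * v"] gS
      by (simp add: S_def)
    finally have "\<forall>x\<in>B. (if g x \<in> T then u (g x) else 0) = 0"
      using ind[unfolded int_independent_def, rule_format, of "\<lambda>x. if g x \<in> T then u (g x) else 0"] sum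
      by simp
    moreover obtain x where "x \<in> B" "v = g x" using v T(2) by auto
    ultimately show "u v = 0" using v by auto
  qed
qed

lemma Kronecker_int_independent:
  assumes B: "finite B" and ind: "int_independent g B" and \<epsilon>: "\<epsilon> > 0"
  shows "\<exists>y (h::'a \<Rightarrow> int). \<forall>b\<in>B. \<bar>y * g b - of_int (h b) - t b\<bar> < \<epsilon>"
proof -
  obtain e where e: "bij_betw e {..<card B} B"
    using ex_bij_betw_nat_finite[OF B] by (auto simp: atLeast0LessThan)
  have "g ` B = (g \<circ> e) ` {..<card B}"
    using e by (metis bij_betw_def image_comp)
  then have indep: "module.independent (\<lambda>r. (*) (real_of_int r)) ((g \<circ> e) ` {..<card B})"
    using module_independent_int_independent[OF B ind] by simp
  have inj: "inj_on (g \<circ> e) {..<card B}"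
    using e inj_on_int_independent[OF B ind] by (auto simp: bij_betw_def intro: comp_inj_on)
  obtain y h where yh: "\<And>i. i < card B \<Longrightarrow> \<bar>y * g (e i) - of_int (h i) - t (e i)\<bar> < \<epsilon>"
    using Kronecker_thm_1[OF indep inj \<epsilon>, of "t \<circ> e"] by auto
  show ?thesis
  proof (intro exI[of _ y] exI[of _ "\<lambda>b. h (inv_into {..<card B} e b)"] ballI)
    fix b assume "b \<in> B"
    then have "b \<in> e ` {..<card B}"
      using e by (simp add: bij_betw_def)
    then have "inv_into {..<card B} e b < card B" "e (inv_into {..<card B} e b) = b"
      using inv_into_into[of b e "{..<card B}"] by (auto simp: f_inv_into_f)
    then show "\<bar>y * g b - of_int (h (inv_into {..<card B} e b)) - t b\<bar> < \<epsilon>"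
      using yh by metis
  qed
qed

section \<open>Measurability of the closure of a line\<close>

lemma orbit_closure_rational_approx:
  assumes J: "finite J" and x: "x \<in> orbit_closure J freq" and e: "e > 0"
  shows "\<exists>q\<in>\<rat>. \<forall>j\<in>J. dist_int (x j - freq j * q / (2 * pi)) < e"
proof -
  define K where "K = (\<Sum>j\<in>J. \<bar>freq j\<bar> / (2 * pi)) + 1"
  have K: "K > 0" unfolding K_def by (simp add: add_nonneg_pos sum_nonneg)
  have "e / 2 > 0" using e by simp
  then obtain y where y: "\<And>j. j \<in> J \<Longrightarrow> dist_int (x j - freq j * y / (2 * pi)) < e / 2"
    using x unfolding orbit_closure_def dist_mod1_eq_dist_int by blast
  obtain q where q: "q \<in> \<rat>" "y - e / (2 * K) < q" "q < y"
    using Rats_dense_in_real[of "y - e / (2 * K)" y] e K by auto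
  have "dist_int (x j - freq j * q / (2 * pi)) < e" if j: "j \<in> J" for j
  proof -
    have "\<bar>freq j\<bar> / (2 * pi) \<le> K"
      unfolding K_def using member_le_sum[of j J "\<lambda>j. \<bar>freq j\<bar> / (2 * pi)"] j J by simp
    then have "\<bar>freq j / (2 * pi) * (y - q)\<bar> \<le> K * (e / (2 * K))"
      unfolding abs_mult using q K by (intro mult_mono) auto
    then have d: "\<bar>freq j / (2 * pi) * (y - q)\<bar> \<le> e / 2"
      using K by simp
    have "x j - freq j * q / (2 * pi) = (x j - freq j * y / (2 * pi)) + freq j / (2 * pi) * (y - q)"
      by (simp add: field_simps)
    then have "dist_int (x j - freq j * q / (2 * pi))
        \<le> dist_int (x j - freq j * y / (2 * pi)) + \<bar>freq j / (2 * pi) * (y - q)\<bar>"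
      by (simp only: dist_int_add_le_abs)
    then show ?thesis
      using y[OF j] d by simp
  qed
  then show ?thesis using q(1) by blast
qed

lemma orbit_closure_eq_rational:
  assumes J: "finite J"
  shows "orbit_closure J freq = {x \<in> torus_pts J.
     \<forall>n::nat. \<exists>q\<in>\<rat>. \<forall>j\<in>J. dist_int (x j - freq j * q / (2 * pi)) < 1 / Suc n}"
proof (intro set_eqI iffI)
  fix x assume "x \<in> orbit_closure J freq"
  then show "x \<in> {x \<in> torus_pts J.
      \<forall>n::nat. \<exists>q\<in>\<rat>. \<forall>j\<in>J. dist_int (x j - freq j * q / (2 * pi)) < 1 / Suc n}"
    using orbit_closure_rational_approx[OF J] by (simp add: orbit_closure_def)
next
  fix x assume x: "x \<in> {x \<in> torus_pts J.
      \<forall>n::nat. \<exists>q\<in>\<rat>. \<forall>j\<in>J. dist_int (x j - freq j * q / (2 * pi)) < 1 / Suc n}"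
  have "\<exists>y. \<forall>j\<in>J. dist_mod1 (x j) (freq j * y / (2 * pi)) < e" if e: "e > 0" for e
  proof -
    obtain n where n: "inverse (real (Suc n)) < e" using reals_Archimedean[OF e] by blast
    obtain q where "\<forall>j\<in>J. dist_int (x j - freq j * q / (2 * pi)) < 1 / Suc n" using x by blast
    then show ?thesis
      using n by (auto simp: dist_mod1_eq_dist_int inverse_eq_divide intro!: exI[of _ q])
  qed
  then show "x \<in> orbit_closure J freq" using x by (simp add: orbit_closure_def)
qed

lemma sets_orbit_closure:
  assumes J: "finite J"
  shows "orbit_closure J freq \<in> sets (torus_borel J)"
proof -
  let ?M = "torus_borel J"
  have [measurable]: "(\<lambda>x. x j) \<in> borel_measurable ?M" if "j \<in> J" for j
    unfolding torus_borel_def using that by measurable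
  have pts: "torus_pts J \<in> sets ?M"
    unfolding torus_pts_def torus_borel_def using J by (intro sets_PiM_I_finite) auto
  have "{x\<in>space ?M. \<forall>j\<in>J. dist_int (x j - freq j * q / (2 * pi)) < r} \<in> sets ?M" for q r
  proof (cases "J = {}")
    case False
    then show ?thesis by (intro sets.sets_Collect_finite_All'[OF _ J]) measurable
  qed simp
  then have "{x\<in>space ?M. \<forall>n::nat. \<exists>q\<in>\<rat>. \<forall>j\<in>J. dist_int (x j - freq j * q / (2 * pi)) < 1 / Suc n}
      \<in> sets ?M"
    by (intro sets.sets_Collect_countable_All sets.sets_Collect_countable_Ex' countable_rat)
  moreover have "orbit_closure J freq = torus_pts J \<inter>
      {x\<in>space ?M. \<forall>n::nat. \<exists>q\<in>\<rat>. \<forall>j\<in>J. dist_int (x j - freq j * q / (2 * pi)) < 1 / Suc n}"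
    using sets.sets_into_space[OF pts] by (auto simp: orbit_closure_eq_rational[OF J])
  ultimately show ?thesis
    using pts by simp
qed

section \<open>Rotation invariance of the uniform measure on the unit interval\<close>

definition uniform01 :: "real measure" where
  "uniform01 = uniform_measure lborel {0..<1}"

lemma sets_uniform01 [simp, measurable_cong]: "sets uniform01 = sets borel"
  by (simp add: uniform01_def)
lemma space_uniform01 [simp]: "space uniform01 = UNIV"
  by (simp add: uniform01_def)

lemma prob_space_uniform01: "prob_space uniform01"
  unfolding uniform01_def by (rule prob_space_uniform_measure) auto

lemma emeasure_uniform01: "S \<in> sets borel \<Longrightarrow> emeasure uniform01 S = emeasure lborel (S \<inter> {0..<1})"
  unfolding uniform01_def by (subst emeasure_uniform_measure) (auto simp: Int_commute divide_ennreal_def)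

lemma emeasure_lborel_translate:
  fixes c :: real
  assumes S: "S \<in> sets borel"
  shows "emeasure lborel ((+) c -` S) = emeasure lborel S"
proof -
  have "emeasure lborel S = emeasure (distr lborel borel ((+) c)) S" by (simp add: lborel_distr_plus)
  also have "\<dots> = emeasure lborel ((+) c -` S \<inter> space lborel)"
    by (rule emeasure_distr) (use S in auto)
  finally show ?thesis by simp
qed

lemma vimage_frac_shift_Ico:
  assumes c: "0 \<le> c" "c < 1"
  shows "(\<lambda>t. frac (t + c)) -` S \<inter> {0..<1} = (+) c -` (S \<inter> {c..<1}) \<union> (+) (c - 1) -` (S \<inter> {0..<c})"
proof -
  have "frac (t + c) = (if t + c < 1 then t + c else t + c - 1)" if "t \<in> {0..<1}" for t
    using that c by (auto simp: frac_eq frac_unique_iff)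
  then show ?thesis
    using c by (auto simp: add.commute add_diff_eq split: if_splits)
qed

lemma distr_uniform01_frac_shift: "distr uniform01 borel (\<lambda>t. frac (t + c)) = uniform01"
proof -
  define c' where "c' = frac c"
  have c': "0 \<le> c'" "c' < 1" by (auto simp: c'_def frac_lt_1)
  have "(\<lambda>t. frac (t + c)) = (\<lambda>t. frac (t + c'))"
    by (intro ext frac_eq_if_diff_Ints) (simp add: c'_def frac_def)
  moreover have "distr uniform01 borel (\<lambda>t. frac (t + c')) = uniform01"
  proof (rule measure_eqI)
    fix S assume "S \<in> sets (distr uniform01 borel (\<lambda>t. frac (t + c')))"
    then have S: "S \<in> sets borel" by simp
    have "(\<lambda>t. frac (t + c')) \<in> borel_measurable borel" by measurable
    from measurable_sets[OF this S] have "(\<lambda>t. frac (t + c')) -` S \<in> sets borel"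
      by simp
    then have "emeasure (distr uniform01 borel (\<lambda>t. frac (t + c'))) S
        = emeasure lborel ((\<lambda>t. frac (t + c')) -` S \<inter> {0..<1})"
      using S by (simp add: emeasure_distr emeasure_uniform01)
    also have "\<dots> = emeasure lborel ((+) c' -` (S \<inter> {c'..<1})) + emeasure lborel ((+) (c' - 1) -` (S \<inter> {0..<c'}))"
      unfolding vimage_frac_shift_Ico[OF c'] using S
      by (intro plus_emeasure[symmetric]) (auto intro: measurable_sets[of _ borel borel])
    also have "\<dots> = emeasure lborel (S \<inter> {c'..<1}) + emeasure lborel (S \<inter> {0..<c'})"
      using emeasure_lborel_translate[of "S \<inter> {c'..<1}" c']
        emeasure_lborel_translate[of "S \<inter> {0..<c'}" "c' - 1"] S by simp
    also have "\<dots> = emeasure lborel (S \<inter> {0..<1})"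
      using S c' by (subst plus_emeasure) (auto intro: arg_cong[where f = "emeasure lborel"])
    finally show "emeasure (distr uniform01 borel (\<lambda>t. frac (t + c'))) S = emeasure uniform01 S"
      using S by (simp add: emeasure_uniform01)
  qed simp
  ultimately show ?thesis by simp
qed

lemma distr_PiM_uniform01_frac_shift:
  assumes B: "finite B"
  shows "distr (PiM B (\<lambda>_. uniform01)) (PiM B (\<lambda>_. borel)) (\<lambda>t. \<lambda>b\<in>B. frac (t b + c b))
    = PiM B (\<lambda>_. uniform01)"
    (is "distr ?P _ ?\<sigma> = _")
proof -
  interpret PS: product_prob_space "\<lambda>_. uniform01"
    by (intro product_prob_spaceI prob_space_uniform01)
  have \<sigma>_meas: "?\<sigma> \<in> measurable ?P (PiM B (\<lambda>_. borel))"
    by measurable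
  have shift_meas: "(\<lambda>x. frac (x + c b)) \<in> borel_measurable borel" for b
    by measurable
  show ?thesis
  proof (rule PS.PiM_eqI[OF B])
    fix A assume A: "\<And>i. i \<in> B \<Longrightarrow> A i \<in> sets uniform01"
    have "PiE B A \<in> sets (PiM B (\<lambda>_. borel))"
      using A B by (intro sets_PiM_I_finite) auto
    moreover have "?\<sigma> -` PiE B A \<inter> space ?P = PiE B (\<lambda>b. (\<lambda>x. frac (x + c b)) -` A b)"
      by (auto simp: space_PiM PiE_def Pi_def extensional_def)
    ultimately have "emeasure (distr ?P (PiM B (\<lambda>_. borel)) ?\<sigma>) (PiE B A)
        = emeasure ?P (PiE B (\<lambda>b. (\<lambda>x. frac (x + c b)) -` A b))"
      by (simp add: emeasure_distr[OF \<sigma>_meas])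
    also have "\<dots> = (\<Prod>b\<in>B. emeasure uniform01 ((\<lambda>x. frac (x + c b)) -` A b))"
    proof (rule PS.emeasure_PiM[OF B])
      show "(\<lambda>x. frac (x + c b)) -` A b \<in> sets uniform01" if "b \<in> B" for b
        using measurable_sets[OF shift_meas, of "A b"] A[OF that] by simp
    qed
    also have "\<dots> = (\<Prod>b\<in>B. emeasure uniform01 (A b))"
    proof (rule prod.cong[OF refl])
      fix b assume b: "b \<in> B"
      have "emeasure uniform01 (A b) = emeasure (distr uniform01 borel (\<lambda>x. frac (x + c b))) (A b)"
        by (simp add: distr_uniform01_frac_shift)
      also have "\<dots> = emeasure uniform01 ((\<lambda>x. frac (x + c b)) -` A b \<inter> space uniform01)"
        by (rule emeasure_distr) (use A[OF b] shift_meas in auto)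
      finally show "emeasure uniform01 ((\<lambda>x. frac (x + c b)) -` A b) = emeasure uniform01 (A b)"
        by simp
    qed
    finally show "emeasure (distr ?P (PiM B (\<lambda>_. borel)) ?\<sigma>) (PiE B A)
        = (\<Prod>b\<in>B. emeasure uniform01 (A b))" .
  next
    have "sets (PiM B (\<lambda>_. borel :: real measure)) = sets ?P"
      by (rule sets_PiM_cong) auto
    then show "sets (distr ?P (PiM B (\<lambda>_. borel)) ?\<sigma>) = sets ?P"
      by simp
  qed
qed

section \<open>Existence of the Haar measure on the closure of a line\<close>

definition torus_param :: "'a set \<Rightarrow> 'b set \<Rightarrow> ('a \<Rightarrow> 'b \<Rightarrow> int) \<Rightarrow> ('b \<Rightarrow> real) \<Rightarrow> 'a \<Rightarrow> real"
  where "torus_param J B n t = (\<lambda>j\<in>J. frac (\<Sum>b\<in>B. of_int (n j b) * t b))"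

text \<open>By Kronecker's theorem some point \<open>y\<close> of the line has \<open>y g\<^sub>b \<approx> t\<^sub>b\<close> modulo \<open>1\<close>
  for all \<open>b\<close>, and then its coordinates approximate \<open>torus_param J B n t\<close> modulo \<open>1\<close>.\<close>

lemma torus_param_in_orbit_closure:
  assumes J: "finite J" and B: "finite B" and ind: "int_independent g B"
    and repr: "\<And>j. j \<in> J \<Longrightarrow> freq j / (2 * pi) = (\<Sum>b\<in>B. of_int (n j b) * g b)"
  shows "torus_param J B n t \<in> orbit_closure J freq"
proof -
  have "\<exists>y. \<forall>j\<in>J. dist_mod1 (torus_param J B n t j) (freq j * y / (2 * pi)) < e" if "e > 0" for e
  proof -
    define K where "K = (\<Sum>j\<in>J. \<Sum>b\<in>B. \<bar>real_of_int (n j b)\<bar>) + 1"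
    have K: "K > 0" unfolding K_def by (simp add: add_nonneg_pos sum_nonneg)
    obtain y and h :: "'b \<Rightarrow> int" where yh: "\<And>b. b \<in> B \<Longrightarrow> \<bar>y * g b - of_int (h b) - t b\<bar> < e / K"
      using Kronecker_int_independent[OF B ind, of "e / K" t] \<open>e > 0\<close> K by auto
    have "dist_int (frac (\<Sum>b\<in>B. of_int (n j b) * t b) - freq j * y / (2 * pi)) < e" if j: "j \<in> J" for j
    proof -
      have "frac (\<Sum>b\<in>B. of_int (n j b) * t b) - freq j * y / (2 * pi)
          - (\<Sum>b\<in>B. of_int (n j b) * (t b - y * g b)) = - of_int \<lfloor>\<Sum>b\<in>B. of_int (n j b) * t b\<rfloor>"
        using repr[OF j] by (simp add: frac_def sum_distrib_left right_diff_distrib sum_subtractf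
            field_simps)
      then have "dist_int (frac (\<Sum>b\<in>B. of_int (n j b) * t b) - freq j * y / (2 * pi))
          = dist_int (\<Sum>b\<in>B. of_int (n j b) * (t b - y * g b))"
        by (intro dist_int_cong) (metis Ints_minus Ints_of_int)
      also have "\<dots> \<le> (\<Sum>b\<in>B. \<bar>of_int (n j b)\<bar>) * (e / K)"
      proof (rule dist_int_sum_int_mult_le[OF B])
        fix b assume "b \<in> B"
        then show "dist_int (t b - y * g b) \<le> e / K"
          using dist_int_le[of "t b - y * g b" "- h b"] yh[of b] by simp
      qed
      also have "\<dots> < K * (e / K)"
      proof (rule mult_strict_right_mono)
        show "(\<Sum>b\<in>B. \<bar>real_of_int (n j b)\<bar>) < K"
          unfolding K_def using member_le_sum[of j J "\<lambda>j. \<Sum>b\<in>B. \<bar>real_of_int (n j b)\<bar>"] j J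
          by (simp add: sum_nonneg)
      qed (use \<open>e > 0\<close> K in simp)
      finally show ?thesis using K by simp
    qed
    then show ?thesis
      by (auto simp: torus_param_def dist_mod1_eq_dist_int)
  qed
  moreover have "torus_param J B n t \<in> torus_pts J"
    by (auto simp: torus_param_def torus_pts_def frac_lt_1)
  ultimately show ?thesis
    by (simp add: orbit_closure_def)
qed

lemma eq_torus_param_if_diff_Ints:
  assumes "a \<in> torus_pts J" and "\<And>j. j \<in> J \<Longrightarrow> a j - (\<Sum>b\<in>B. of_int (n j b) * l b) \<in> \<int>"
  shows "a = torus_param J B n l"
proof (rule ext)
  fix j
  show "a j = torus_param J B n l j"
  proof (cases "j \<in> J")
    case True
    then have "frac (a j) = frac (\<Sum>b\<in>B. of_int (n j b) * l b)"
      by (intro frac_eq_if_diff_Ints assms(2))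
    moreover have "a j \<in> {0..<1}"
      using assms(1) True by (auto simp: torus_pts_def)
    ultimately show ?thesis
      using True by (simp add: torus_param_def)
  qed (use assms(1) in \<open>auto simp: torus_param_def torus_pts_def PiE_def extensional_def\<close>)
qed

lemma convergent_subseq_finite_coordinates:
  fixes t :: "nat \<Rightarrow> 'a \<Rightarrow> real"
  assumes B: "finite B" and bounded: "\<And>k b. \<bar>t k b\<bar> \<le> C"
  obtains l r where "strict_mono r" "\<And>b. b \<in> B \<Longrightarrow> (\<lambda>k. t (r k) b) \<longlonglongrightarrow> l b"
proof -
  have "\<forall>D\<subseteq>B. \<exists>l. \<exists>r::nat\<Rightarrow>nat. strict_mono r \<and>
      (\<forall>e>0. \<forall>\<^sub>F k in sequentially. \<forall>i\<in>D. dist (t (r k) i) (l i) < e)"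
  proof (rule compact_lemma_general[where proj = "\<lambda>x i. x i" and unproj = "\<lambda>x. x"])
    show "bounded ((\<lambda>x. x i) ` range t)" for i
      unfolding bounded_iff using bounded by auto
  qed (use B in auto)
  then obtain l r where r: "strict_mono r"
    and conv: "\<And>e. e > 0 \<Longrightarrow> \<forall>\<^sub>F k in sequentially. \<forall>b\<in>B. dist (t (r k) b) (l b) < e"
    by blast
  have "(\<lambda>k. t (r k) b) \<longlonglongrightarrow> l b" if "b \<in> B" for b
  proof (rule tendstoI)
    fix e :: real assume "e > 0"
    show "\<forall>\<^sub>F k in sequentially. dist (t (r k) b) (l b) < e"
      using conv[OF \<open>e > 0\<close>] by (rule eventually_mono) (use that in blast)
  qed
  with r show thesis by (rule that)
qed

text \<open>A point of the closure is a limit of points of the line, whose parameters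
  \<open>(frac (g b * y))\<^sub>b\<close> have a convergent subsequence.\<close>

lemma orbit_closure_subset_range_torus_param:
  assumes B: "finite B"
    and repr: "\<And>j. j \<in> J \<Longrightarrow> freq j / (2 * pi) = (\<Sum>b\<in>B. of_int (n j b) * g b)"
    and a: "a \<in> orbit_closure J freq"
  shows "\<exists>l. a = torus_param J B n l"
proof -
  have "\<forall>k::nat. \<exists>y. \<forall>j\<in>J. dist_int (a j - freq j * y / (2 * pi)) < inverse (Suc k)"
    using a unfolding orbit_closure_def dist_mod1_eq_dist_int by simp
  then obtain ys
    where ys: "\<And>k j. j \<in> J \<Longrightarrow> dist_int (a j - freq j * ys k / (2 * pi)) < inverse (Suc k)"
    by metis
  define t where "t k b = frac (g b * ys k)" for k b
  have "\<bar>t k b\<bar> \<le> 1" for k b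
    by (simp add: t_def frac_lt_1 less_imp_le)
  then obtain l r where r: "strict_mono r" and lim: "\<And>b. b \<in> B \<Longrightarrow> (\<lambda>k. t (r k) b) \<longlonglongrightarrow> l b"
    using convergent_subseq_finite_coordinates[OF B] by metis
  have "a j - (\<Sum>b\<in>B. of_int (n j b) * l b) \<in> \<int>" if j: "j \<in> J" for j
  proof -
    have "(\<lambda>k. dist_int (a j - (\<Sum>b\<in>B. of_int (n j b) * t (r k) b)))
        \<longlonglongrightarrow> dist_int (a j - (\<Sum>b\<in>B. of_int (n j b) * l b))"
      using lim by (intro tendsto_intros) auto
    moreover have "(\<lambda>k. inverse (real (Suc (r k)))) \<longlonglongrightarrow> 0"
      using LIMSEQ_subseq_LIMSEQ[OF LIMSEQ_inverse_real_of_nat r] by (simp add: comp_def)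
    moreover have "dist_int (a j - (\<Sum>b\<in>B. of_int (n j b) * t (r k) b)) \<le> inverse (Suc (r k))" for k
    proof -
      define y where "y = ys (r k)"
      have "(\<Sum>b\<in>B. of_int (n j b) * t (r k) b)
          = (\<Sum>b\<in>B. of_int (n j b) * g b * y - of_int (n j b * \<lfloor>g b * y\<rfloor>))"
        by (rule sum.cong) (simp_all add: t_def y_def frac_def algebra_simps)
      also have "\<dots> = freq j * y / (2 * pi) - (\<Sum>b\<in>B. of_int (n j b * \<lfloor>g b * y\<rfloor>))"
        by (simp add: sum_subtractf sum_distrib_right[symmetric] repr[OF j, symmetric])
      finally have "a j - (\<Sum>b\<in>B. of_int (n j b) * t (r k) b)
          = (a j - freq j * y / (2 * pi)) + (\<Sum>b\<in>B. of_int (n j b * \<lfloor>g b * y\<rfloor>))"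
        by simp
      then have "dist_int (a j - (\<Sum>b\<in>B. of_int (n j b) * t (r k) b))
          = dist_int (a j - freq j * y / (2 * pi))"
        by (intro dist_int_cong) (auto intro!: Ints_sum Ints_mult)
      then show ?thesis
        using ys[OF j, of "r k"] by (simp add: y_def)
    qed
    ultimately have "dist_int (a j - (\<Sum>b\<in>B. of_int (n j b) * l b)) \<le> 0"
      by (intro tendsto_le[OF trivial_limit_sequentially]) auto
    then show ?thesis
      using dist_int_nonneg[of "a j - (\<Sum>b\<in>B. of_int (n j b) * l b)"]
      by (simp flip: dist_int_eq_0_iff)
  qed
  moreover have "a \<in> torus_pts J"
    using a by (simp add: orbit_closure_def)
  ultimately show ?thesis
    using eq_torus_param_if_diff_Ints by blast
qed

lemma torus_add_torus_param:
  "torus_add J (torus_param J B n l) (torus_param J B n t) = torus_param J B n (\<lambda>b\<in>B. frac (t b + l b))"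
proof (rule ext)
  fix j
  define St where "St = (\<Sum>b\<in>B. of_int (n j b) * t b)"
  define Sl where "Sl = (\<Sum>b\<in>B. of_int (n j b) * l b)"
  have "(\<Sum>b\<in>B. of_int (n j b) * frac (t b + l b))
      = frac St + frac Sl + of_int (\<lfloor>St\<rfloor> + \<lfloor>Sl\<rfloor> - (\<Sum>b\<in>B. n j b * \<lfloor>t b + l b\<rfloor>))"
    unfolding St_def Sl_def frac_def
    by (simp add: sum_subtractf[symmetric] sum.distrib[symmetric] algebra_simps)
  then have "frac (frac St + frac Sl) = frac (\<Sum>b\<in>B. of_int (n j b) * frac (t b + l b))"
    by (intro frac_eq_if_diff_Ints) (simp del: of_int_diff of_int_add)
  then show "torus_add J (torus_param J B n l) (torus_param J B n t) j
      = torus_param J B n (\<lambda>b\<in>B. frac (t b + l b)) j"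
    by (simp add: torus_add_def torus_param_def St_def Sl_def)
qed

text \<open>The closure of the line is the image of the torus \<open>T\<^sup>B\<close> under \<open>torus_param\<close>, and the
  image of the Lebesgue measure of \<open>T\<^sup>B\<close> is invariant because translations of \<open>T\<^sup>B\<close> are.\<close>

lemma is_haar_prob_distr_torus_param:
  assumes J: "finite J" and B: "finite B" and ind: "int_independent g B"
    and repr: "\<And>j. j \<in> J \<Longrightarrow> freq j / (2 * pi) = (\<Sum>b\<in>B. of_int (n j b) * g b)"
  shows "is_haar_prob J (orbit_closure J freq)
    (distr (PiM B (\<lambda>_. uniform01)) (torus_borel J) (torus_param J B n))"
    (is "is_haar_prob J ?A (distr ?P _ _)")
proof -
  have P: "prob_space ?P"
    by (rule prob_space_PiM) (rule prob_space_uniform01)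
  have param_meas: "torus_param J B n \<in> measurable (PiM B (\<lambda>_. borel)) (torus_borel J)"
    unfolding torus_param_def torus_borel_def by measurable
  have param_meas': "torus_param J B n \<in> measurable ?P (torus_borel J)"
    unfolding torus_param_def torus_borel_def by measurable
  have A: "?A \<in> sets (torus_borel J)" by (rule sets_orbit_closure[OF J])
  show ?thesis
  proof (unfold is_haar_prob_def, intro conjI ballI)
    show "prob_space (distr ?P (torus_borel J) (torus_param J B n))"
      by (rule prob_space.prob_space_distr[OF P param_meas'])
    have "torus_param J B n -` ?A \<inter> space ?P = space ?P"
      using torus_param_in_orbit_closure[where freq = freq and n = n, OF J B ind repr] by blast
    then show "emeasure (distr ?P (torus_borel J) (torus_param J B n)) ?A = 1"
      using prob_space.emeasure_space_1[OF P] by (simp add: emeasure_distr[OF param_meas' A])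
  next
    fix a assume "a \<in> ?A"
    then obtain l where l: "a = torus_param J B n l"
      using orbit_closure_subset_range_torus_param[where freq = freq and n = n, OF B repr] by blast
    define \<sigma> where "\<sigma> t = (\<lambda>b\<in>B. frac (t b + l b))" for t :: "'b \<Rightarrow> real"
    have \<sigma>_meas: "\<sigma> \<in> measurable ?P (PiM B (\<lambda>_. borel))" unfolding \<sigma>_def by measurable
    have "distr (distr ?P (torus_borel J) (torus_param J B n)) (torus_borel J) (torus_add J a)
        = distr ?P (torus_borel J) (torus_add J a \<circ> torus_param J B n)"
      by (rule distr_distr[OF torus_add_measurable param_meas'])
    also have "\<dots> = distr ?P (torus_borel J) (torus_param J B n \<circ> \<sigma>)"
      by (rule distr_cong) (auto simp: l torus_add_torus_param \<sigma>_def)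
    also have "\<dots> = distr (distr ?P (PiM B (\<lambda>_. borel)) \<sigma>) (torus_borel J) (torus_param J B n)"
      by (rule distr_distr[symmetric, OF param_meas \<sigma>_meas])
    also have "distr ?P (PiM B (\<lambda>_. borel)) \<sigma> = ?P"
      unfolding \<sigma>_def by (rule distr_PiM_uniform01_frac_shift[OF B])
    finally show "distr (distr ?P (torus_borel J) (torus_param J B n)) (torus_borel J) (torus_add J a)
        = distr ?P (torus_borel J) (torus_param J B n)" .
  qed (use A in simp_all)
qed

lemma ex_is_haar_prob_orbit_closure:
  assumes J: "finite J"
  shows "\<exists>\<mu>. is_haar_prob J (orbit_closure J freq) \<mu>"
proof -
  obtain B g n where "B \<subseteq> J" "int_independent g B"
    "\<And>j. j \<in> J \<Longrightarrow> freq j / (2 * pi) = (\<Sum>b\<in>B. of_int (n j b) * g b)"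
    by (rule ex_int_independent_integer_basis[OF J, where w = "\<lambda>j. freq j / (2 * pi)"]) blast
  then show ?thesis
    using is_haar_prob_distr_torus_param[OF J finite_subset[OF _ J]] by blast
qed

section \<open>The spectral sum as a trigonometric polynomial\<close>

lemma E_T_eq_w_T_torus_line: "E_T m f \<psi> \<eta> T y = w_T m f \<psi> \<eta> T (torus_line fst y)"
proof -
  have "exp (2 * pi * \<i> * complex_of_real (torus_line fst y j)) = exp (\<i> * complex_of_real (fst j * y))"
    for j :: "real \<times> int"
    by (simp add: torus_line_def field_simps)
  then show ?thesis
    by (simp add: E_T_def w_T_def case_prod_unfold)
qed

lemma trig_poly_w_T:
  assumes "finite (spec_set m T)"
  shows "trig_poly (spec_set m T) (\<lambda>x. complex_of_real (w_T m f \<psi> \<eta> T x))"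
proof -
  have "trig_poly (spec_set m T) (\<lambda>x. 2 * (\<Sum>j\<in>spec_set m T. complex_of_real (real (m (fst j) (snd j))) *
      complex_of_real (Re (fhat f (- snd j) * c_se \<psi> \<eta> (fst j) * exp (2 * pi * \<i> * complex_of_real (x j)))))
      + complex_of_real (b_const m f \<psi> \<eta>))"
    by (intro trig_poly_add trig_poly_scale trig_poly_sum[OF assms] trig_poly_Re_exp_coord[OF assms]
        trig_poly_const)
  then show ?thesis
    by (simp add: w_T_def mult_ac)
qed

theorem lemma4p1:
  fixes m :: "real \<Rightarrow> int \<Rightarrow> nat"
    and f \<psi> :: "real \<Rightarrow> real"
    and h :: "real \<Rightarrow> complex"
    and \<eta> \<eta>0 T :: real
  assumes fin: "finite (spec_set m T)"
    and f_smooth: "\<forall>k x. ((deriv ^^ k) f) differentiable (at x)"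
    and f_per: "\<forall>x. f (x + 2 * pi) = f x"
    and f_mean: "fhat f 0 = 0"
    and psi_smooth: "\<forall>k x. ((deriv ^^ k) \<psi>) differentiable (at x)"
    and psi_even: "\<forall>t. \<psi> (- t) = \<psi> t"
    and psi_nonneg: "\<forall>t. 0 \<le> \<psi> t"
    and psi_supp: "\<forall>t. 1 < \<bar>t\<bar> \<longrightarrow> \<psi> t = 0"
    and psi_int: "(\<psi> has_integral 1) UNIV"
    and eta: "0 < \<eta>" "\<eta> \<le> \<eta>0"
    and T: "0 < T"
    and h: "continuous_on UNIV h"
  shows "((\<lambda>Y. integral {\<eta>0..Y} (\<lambda>y. h (E_T m f \<psi> \<eta> T y)) / complex_of_real Y)
            \<longlongrightarrow> (LINT a|haar_prob (spec_set m T) (orbit_closure (spec_set m T) fst).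
                      h (w_T m f \<psi> \<eta> T a))) at_top
       \<and> (LINT a|haar_prob (spec_set m T) (orbit_closure (spec_set m T) fst).
              h (w_T m f \<psi> \<eta> T a))
         = (LINT x|distr (haar_prob (spec_set m T) (orbit_closure (spec_set m T) fst)) borel
                         (w_T m f \<psi> \<eta> T). h x)"
proof -
  obtain \<mu> where \<mu>: "is_haar_prob (spec_set m T) (orbit_closure (spec_set m T) fst) \<mu>"
    using ex_is_haar_prob_orbit_closure[OF fin] by blast
  have w_T: "trig_poly (spec_set m T) (\<lambda>x. complex_of_real (w_T m f \<psi> \<eta> T x))"
    by (rule trig_poly_w_T[OF fin])
  have "(time_average \<eta>0 (\<lambda>y. h (w_T m f \<psi> \<eta> T (torus_line fst y)))
      \<longlongrightarrow> (\<integral>x. h (w_T m f \<psi> \<eta> T x) \<partial>\<mu>)) at_top"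
    using eta by (intro tendsto_time_average_comp_real_trig_poly[OF \<mu> fin _ w_T h]) simp
  moreover have "(\<integral>x. h x \<partial>distr \<mu> borel (w_T m f \<psi> \<eta> T)) = (\<integral>x. h (w_T m f \<psi> \<eta> T x) \<partial>\<mu>)"
    using borel_measurable_real_trig_poly[OF fin w_T] borel_measurable_continuous_onI[OF h]
    by (intro integral_distr) (simp_all add: measurable_is_haar_prob[OF \<mu>])
  ultimately show ?thesis
    unfolding time_average_def by (simp add: haar_prob_eqI[OF \<mu>] E_T_eq_w_T_torus_line)
qed

end
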